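(* Let $G$ be a finite group, $\varphi\in\mathrm{Aut}(G)$, and $U$ a subgroup with $\Delta(G,\varphi)\leq U\leq G\times G$. Then for $i\in\{1,2\}$ one has $k_i(U')=[k_i(U),G]$.
   Context: $\Delta(G,\varphi)=\{(g,\varphi(g)):g\in G\}\leq G\times G$ (twisted diagonal subgroup). For $U\leq G\times G$: $k_1(U)=\{g:(g,1)\in U\}$, $k_2(U)=\{h:(1,h)\in U\}$. $U'$ denotes the commutator subgroup of $U$, and $[X,G]$ the subgroup generated by commutators $[x,g]$, $x\in X$, $g\in G$. *)

theory Defs
  imports "HOL-Algebra.Algebra"
begin

definition twisted_diag :: "('a, 'b) monoid_scheme \<Rightarrow> ('a \<Rightarrow> 'a) \<Rightarrow> ('a \<times> 'a) set" where
  "twisted_diag G \<phi> = {(g, \<phi> g) | g. g \<in> carrier G}"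

definition k1 :: "('a, 'b) monoid_scheme \<Rightarrow> ('a \<times> 'a) set \<Rightarrow> 'a set" where
  "k1 G U = {g \<in> carrier G. (g, \<one>\<^bsub>G\<^esub>) \<in> U}"

definition k2 :: "('a, 'b) monoid_scheme \<Rightarrow> ('a \<times> 'a) set \<Rightarrow> 'a set" where
  "k2 G U = {h \<in> carrier G. (\<one>\<^bsub>G\<^esub>, h) \<in> U}"

definition comm_subgroup :: "('a, 'b) monoid_scheme \<Rightarrow> 'a set \<Rightarrow> 'a set" where
  "comm_subgroup G A = generate G
     (\<Union>x\<in>A. \<Union>g\<in>carrier G. {((inv\<^bsub>G\<^esub> x) \<otimes>\<^bsub>G\<^esub> (inv\<^bsub>G\<^esub> g)) \<otimes>\<^bsub>G\<^esub> x \<otimes>\<^bsub>G\<^esub> g})"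

end

theory Submission
  imports Defs
begin

(* Let K = k1(U) and N = [K, G]. As U contains the twisted diagonal, its first projection is
   onto G, so K is normal in G, hence so is N, and K is central modulo N. The commutator of
   (x^-1, 1) and (g^-1, h^-1) in U is ([x, g], 1), which gives N <= k1(U').
   Conversely U contains the graph {(s b, b)} of s = phi^-1, so each (a, b) in U has
   a in s(b) K; modulo N the first coordinate of a commutator in U is therefore s applied to
   the second. The elements of U with this property form a subgroup, so it holds on all of U',
   and for (g, 1) in U' it says g in N. The case of k2 follows by swapping the two factors. *)

context group begin

lemma mult_inv_cancel_left: "x \<in> carrier G \<Longrightarrow> y \<in> carrier G \<Longrightarrow> x \<otimes> (inv x \<otimes> y) = y"
  by (simp add: m_assoc[symmetric])

lemma inv_mult_cancel_left: "x \<in> carrier G \<Longrightarrow> y \<in> carrier G \<Longrightarrow> inv x \<otimes> (x \<otimes> y) = y"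
  by (simp add: m_assoc[symmetric])

lemma commute_if_commutator_eq_one:
  assumes "x \<in> carrier G" "y \<in> carrier G" "inv x \<otimes> inv y \<otimes> x \<otimes> y = \<one>"
  shows "x \<otimes> y = y \<otimes> x"
proof -
  have "inv (y \<otimes> x) \<otimes> (x \<otimes> y) = \<one>"
    using assms by (simp add: inv_mult_group m_assoc)
  then show ?thesis
    using assms(1,2) by (metis inv_closed inv_equality inv_inv m_closed)
qed

lemma commutator_mult_central:
  assumes "s \<in> carrier G" "t \<in> carrier G" "x \<in> carrier G" "y \<in> carrier G"
    and "\<And>z. z \<in> carrier G \<Longrightarrow> x \<otimes> z = z \<otimes> x"
    and "\<And>z. z \<in> carrier G \<Longrightarrow> y \<otimes> z = z \<otimes> y"
  shows "s \<otimes> x \<otimes> (t \<otimes> y) \<otimes> inv (s \<otimes> x) \<otimes> inv (t \<otimes> y) = s \<otimes> t \<otimes> inv s \<otimes> inv t"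
proof -
  have "s \<otimes> x \<otimes> (t \<otimes> y) = s \<otimes> t \<otimes> (x \<otimes> y)"
    using assms(1-4) assms(5)[of t] by (metis m_assoc m_closed)
  moreover have "inv (s \<otimes> x) \<otimes> inv (t \<otimes> y) = inv (t \<otimes> s \<otimes> (x \<otimes> y))"
    using assms(1-4) assms(6)[of s] assms(6)[of x] by (metis inv_mult_group m_assoc m_closed)
  ultimately show ?thesis
    using assms(1-4) by (simp add: m_assoc inv_mult_group mult_inv_cancel_left)
qed

lemma conj_commutator:
  assumes "x \<in> carrier G" "y \<in> carrier G" "g \<in> carrier G"
  shows "g \<otimes> (inv x \<otimes> inv y \<otimes> x \<otimes> y) \<otimes> inv g =
    inv (g \<otimes> x \<otimes> inv g) \<otimes> inv (g \<otimes> y \<otimes> inv g) \<otimes> (g \<otimes> x \<otimes> inv g) \<otimes> (g \<otimes> y \<otimes> inv g)"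
  using assms by (simp add: m_assoc inv_mult_group inv_mult_cancel_left)

lemma commutator_in_comm_subgroup:
  "x \<in> A \<Longrightarrow> g \<in> carrier G \<Longrightarrow> inv x \<otimes> inv g \<otimes> x \<otimes> g \<in> comm_subgroup G A"
  unfolding comm_subgroup_def by (blast intro: generate.incl)

lemma comm_subgroup_normal:
  assumes "A \<subseteq> carrier G" and conj_closed: "\<And>x g. x \<in> A \<Longrightarrow> g \<in> carrier G \<Longrightarrow> g \<otimes> x \<otimes> inv g \<in> A"
  shows "comm_subgroup G A \<lhd> G"
  unfolding comm_subgroup_def
proof (rule normal_generateI)
  show "(\<Union>x\<in>A. \<Union>g\<in>carrier G. {inv x \<otimes> inv g \<otimes> x \<otimes> g}) \<subseteq> carrier G"
    using assms(1) by blast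
next
  fix c g assume "c \<in> (\<Union>x\<in>A. \<Union>g\<in>carrier G. {inv x \<otimes> inv g \<otimes> x \<otimes> g})" and g: "g \<in> carrier G"
  then obtain x y where x: "x \<in> A" and y: "y \<in> carrier G" and c: "c = inv x \<otimes> inv y \<otimes> x \<otimes> y"
    by blast
  have "g \<otimes> x \<otimes> inv g \<in> A" "g \<otimes> y \<otimes> inv g \<in> carrier G"
    using conj_closed[OF x g] y g by simp_all
  moreover have "g \<otimes> c \<otimes> inv g = inv (g \<otimes> x \<otimes> inv g) \<otimes> inv (g \<otimes> y \<otimes> inv g) \<otimes> (g \<otimes> x \<otimes> inv g) \<otimes> (g \<otimes> y \<otimes> inv g)"
    using conj_commutator x y g assms(1) c by blast
  ultimately show "g \<otimes> c \<otimes> inv g \<in> (\<Union>x\<in>A. \<Union>g\<in>carrier G. {inv x \<otimes> inv g \<otimes> x \<otimes> g})"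
    by blast
qed

end

lemma (in normal) r_coset_commutator_mult_central:
  assumes "comm_subgroup G A \<subseteq> H" "A \<subseteq> carrier G" "x \<in> A" "y \<in> A" "s \<in> carrier G" "t \<in> carrier G"
  shows "H #> (s \<otimes> x \<otimes> (t \<otimes> y) \<otimes> inv (s \<otimes> x) \<otimes> inv (t \<otimes> y)) = H #> (s \<otimes> t \<otimes> inv s \<otimes> inv t)"
proof -
  interpret Q: group "G Mod H"
    by (rule factorgroup_is_group)
  interpret \<pi>: group_hom G "G Mod H" "\<lambda>a. H #> a"
    using r_coset_hom_Mod by unfold_locales
  have central: "(H #> z) \<otimes>\<^bsub>G Mod H\<^esub> q = q \<otimes>\<^bsub>G Mod H\<^esub> (H #> z)"
    if zA: "z \<in> A" and q: "q \<in> carrier (G Mod H)" for z q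
  proof -
    obtain g where g: "g \<in> carrier G" "q = H #> g"
      using q unfolding carrier_FactGroup by (rule imageE)
    have z: "z \<in> carrier G"
      using subsetD[OF assms(2) zA] .
    have "inv z \<otimes> inv g \<otimes> z \<otimes> g \<in> H"
      using subsetD[OF assms(1) commutator_in_comm_subgroup[OF zA g(1)]] .
    then have "H #> (inv z \<otimes> inv g \<otimes> z \<otimes> g) = \<one>\<^bsub>G Mod H\<^esub>"
      using coset_join2 subgroup_axioms z g(1) by simp
    then show ?thesis
      using Q.commute_if_commutator_eq_one[of "H #> z" "H #> g"] z g by simp
  qed
  have xy: "x \<in> carrier G" "y \<in> carrier G"
    using assms(2-4) by (auto dest: subsetD)
  show ?thesis
    using Q.commutator_mult_central[of "H #> s" "H #> t" "H #> x" "H #> y"] central assms(3-6) xy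
    by simp
qed

lemma subgroup_equalizer:
  assumes "group_hom G H f" "group_hom G H g"
  shows "subgroup {x \<in> carrier G. f x = g x} G"
proof -
  interpret f: group_hom G H f by fact
  interpret g: group_hom G H g by fact
  show ?thesis
    by (rule f.G.subgroupI) auto
qed

lemma k2_eq_k1_swap: "k2 G V = k1 G (prod.swap ` V)"
  unfolding k1_def k2_def by auto

locale square_subgroup = group G for G (structure) +
  fixes U :: "('a \<times> 'a) set"
  assumes subgroup_square: "subgroup U (G \<times>\<times> G)"
begin

sublocale GG: group "G \<times>\<times> G"
  by (rule DirProd_group) (rule is_group)+

sublocale U: subgroup U "G \<times>\<times> G"
  by (rule subgroup_square)

lemma pair_in_carrier: "(a, b) \<in> U \<Longrightarrow> a \<in> carrier G \<and> b \<in> carrier G"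
  using U.subset by auto

lemma pair_inv_closed: "(a, b) \<in> U \<Longrightarrow> (inv a, inv b) \<in> U"
  using U.m_inv_closed pair_in_carrier by fastforce

lemma pair_mult_closed: "(a, b) \<in> U \<Longrightarrow> (c, d) \<in> U \<Longrightarrow> (a \<otimes> c, b \<otimes> d) \<in> U"
  using U.m_closed by fastforce

lemma subgroup_k1: "subgroup (k1 G U) G"
proof (rule subgroupI)
  show "k1 G U \<noteq> {}"
    using U.one_closed unfolding k1_def by auto
qed (auto simp: k1_def pair_inv_closed[of _ \<one>, simplified] pair_mult_closed[of _ \<one> _ \<one>, simplified])

lemma k1_conj_closed:
  assumes "x \<in> k1 G U" "(g, h) \<in> U"
  shows "g \<otimes> x \<otimes> inv g \<in> k1 G U"
proof -
  have "(g \<otimes> x \<otimes> inv g, h \<otimes> \<one> \<otimes> inv h) \<in> U"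
    using assms by (auto simp: k1_def intro: pair_mult_closed pair_inv_closed)
  then show ?thesis
    using assms pair_in_carrier unfolding k1_def by auto
qed

lemma square_subgroup_derived: "square_subgroup G (derived (G \<times>\<times> G) U)"
  by (intro square_subgroup.intro square_subgroup_axioms.intro is_group
      GG.derived_is_subgroup U.subset)

lemma comm_subgroup_k1_subset_k1_derived:
  assumes fst_surj: "carrier G \<subseteq> fst ` U"
  shows "comm_subgroup G (k1 G U) \<subseteq> k1 G (derived (G \<times>\<times> G) U)"
  unfolding comm_subgroup_def
proof (rule generate_subgroup_incl)
  show "subgroup (k1 G (derived (G \<times>\<times> G) U)) G"
    by (rule square_subgroup.subgroup_k1[OF square_subgroup_derived])
  show "(\<Union>x\<in>k1 G U. \<Union>g\<in>carrier G. {inv x \<otimes> inv g \<otimes> x \<otimes> g}) \<subseteq> k1 G (derived (G \<times>\<times> G) U)"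
  proof (intro UN_least subsetI, elim singletonE)
    fix x g c assume x: "x \<in> k1 G U" and g: "g \<in> carrier G" and c: "c = inv x \<otimes> inv g \<otimes> x \<otimes> g"
    obtain h where gh: "(g, h) \<in> U"
      using g fst_surj by force
    have xU: "(inv x, \<one>) \<in> U" and xG: "x \<in> carrier G"
      using x pair_inv_closed[of x \<one>] unfolding k1_def by auto
    have hU: "(inv g, inv h) \<in> U" and hG: "h \<in> carrier G"
      using gh pair_inv_closed pair_in_carrier by auto
    have comm_eq: "(inv x, \<one>) \<otimes>\<^bsub>G \<times>\<times> G\<^esub> (inv g, inv h) \<otimes>\<^bsub>G \<times>\<times> G\<^esub> inv\<^bsub>G \<times>\<times> G\<^esub> (inv x, \<one>)
        \<otimes>\<^bsub>G \<times>\<times> G\<^esub> inv\<^bsub>G \<times>\<times> G\<^esub> (inv g, inv h) = (c, \<one>)"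
      using xG g hG c by (simp add: inv_DirProd[OF is_group is_group])
    have "(c, \<one>) \<in> derived_set (G \<times>\<times> G) U"
      unfolding comm_eq[symmetric] by (rule UN_I[OF xU UN_I[OF hU singletonI]])
    then have "(c, \<one>) \<in> derived (G \<times>\<times> G) U"
      unfolding derived_def by (rule generate.incl)
    then show "c \<in> k1 G (derived (G \<times>\<times> G) U)"
      using xG g c unfolding k1_def by auto
  qed
qed

lemma comm_subgroup_k1_normal:
  assumes fst_surj: "carrier G \<subseteq> fst ` U"
  shows "comm_subgroup G (k1 G U) \<lhd> G"
proof (rule comm_subgroup_normal)
  show "k1 G U \<subseteq> carrier G"
    by (rule subgroup.subset[OF subgroup_k1])
  fix x g assume x: "x \<in> k1 G U" and g: "g \<in> carrier G"
  then obtain h where "(g, h) \<in> U"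
    using fst_surj by force
  then show "g \<otimes> x \<otimes> inv g \<in> k1 G U"
    using k1_conj_closed x by simp
qed

lemma graph_inv_mult_mem_k1:
  assumes graph: "\<And>b. b \<in> carrier G \<Longrightarrow> (\<sigma> b, b) \<in> U" and pq: "(p, q) \<in> U"
  shows "inv (\<sigma> q) \<otimes> p \<in> k1 G U"
proof -
  have q: "q \<in> carrier G" "p \<in> carrier G"
    using pair_in_carrier[OF pq] by simp_all
  have mem: "(inv (\<sigma> q) \<otimes> p, inv q \<otimes> q) \<in> U"
    using pair_mult_closed[OF pair_inv_closed[OF graph[OF q(1)]] pq] .
  then show ?thesis
    using pair_in_carrier[OF mem] q unfolding k1_def by simp
qed

lemma r_coset_commutator_fst_eq_snd:
  assumes N: "comm_subgroup G (k1 G U) \<lhd> G" and \<sigma>: "\<sigma> \<in> hom G G"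
    and graph: "\<And>b. b \<in> carrier G \<Longrightarrow> (\<sigma> b, b) \<in> U"
    and ab: "(a, b) \<in> U" and cd: "(c, d) \<in> U"
  defines "N \<equiv> comm_subgroup G (k1 G U)"
  shows "N #> (a \<otimes> c \<otimes> inv a \<otimes> inv c) = N #> \<sigma> (b \<otimes> d \<otimes> inv b \<otimes> inv d)"
proof -
  interpret N: normal N G
    using N unfolding N_def .
  interpret \<sigma>: group_hom G G \<sigma>
    using \<sigma> by unfold_locales
  have carr: "a \<in> carrier G" "b \<in> carrier G" "c \<in> carrier G" "d \<in> carrier G"
    using pair_in_carrier[OF ab] pair_in_carrier[OF cd] by simp_all
  \<comment> \<open>\<open>a = \<sigma> b \<otimes> x\<close> and \<open>c = \<sigma> d \<otimes> y\<close> with \<open>x, y \<in> k1 G U\<close>, which is central modulo \<open>N\<close>.\<close>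
  have "N #> (a \<otimes> c \<otimes> inv a \<otimes> inv c)
      = N #> (\<sigma> b \<otimes> (inv (\<sigma> b) \<otimes> a) \<otimes> (\<sigma> d \<otimes> (inv (\<sigma> d) \<otimes> c))
          \<otimes> inv (\<sigma> b \<otimes> (inv (\<sigma> b) \<otimes> a)) \<otimes> inv (\<sigma> d \<otimes> (inv (\<sigma> d) \<otimes> c)))"
    using carr by (simp add: mult_inv_cancel_left)
  also have "\<dots> = N #> (\<sigma> b \<otimes> \<sigma> d \<otimes> inv (\<sigma> b) \<otimes> inv (\<sigma> d))"
    using N.r_coset_commutator_mult_central[OF _ subgroup.subset[OF subgroup_k1]
        graph_inv_mult_mem_k1[OF graph ab] graph_inv_mult_mem_k1[OF graph cd]] carr
    unfolding N_def by simp
  also have "\<dots> = N #> \<sigma> (b \<otimes> d \<otimes> inv b \<otimes> inv d)"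
    using carr by simp
  finally show ?thesis .
qed

lemma k1_derived_subset_comm_subgroup:
  assumes fst_surj: "carrier G \<subseteq> fst ` U" and \<sigma>: "\<sigma> \<in> hom G G"
    and graph: "\<And>b. b \<in> carrier G \<Longrightarrow> (\<sigma> b, b) \<in> U"
  shows "k1 G (derived (G \<times>\<times> G) U) \<subseteq> comm_subgroup G (k1 G U)"
proof -
  define N where "N = comm_subgroup G (k1 G U)"
  have N_normal: "N \<lhd> G"
    unfolding N_def using fst_surj by (rule comm_subgroup_k1_normal)
  then interpret N: normal N G .
  interpret Q: group "G Mod N"
    by (rule N.factorgroup_is_group)
  interpret \<sigma>: group_hom G G \<sigma>
    using \<sigma> by unfold_locales
  have \<pi>_fst: "group_hom (G \<times>\<times> G) (G Mod N) (\<lambda>u. N #> fst u)"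
    using hom_of_fst[OF is_group, where G = G and K = "G Mod N" and f = "\<lambda>a. N #> a"] N.r_coset_hom_Mod
    by unfold_locales (simp add: o_def)
  have \<pi>\<sigma>_snd: "group_hom (G \<times>\<times> G) (G Mod N) (\<lambda>u. N #> \<sigma> (snd u))"
    using hom_of_snd[OF is_group, where H = G and K = "G Mod N" and f = "\<lambda>b. N #> \<sigma> b"]
      Group.hom_compose[OF \<sigma> N.r_coset_hom_Mod]
    by unfold_locales (simp add: o_def)
  define S where "S = {u \<in> U. N #> fst u = N #> \<sigma> (snd u)}"
  have "S = U \<inter> {u \<in> carrier (G \<times>\<times> G). N #> fst u = N #> \<sigma> (snd u)}"
    unfolding S_def using U.subset by auto
  then have "subgroup S (G \<times>\<times> G)"
    using GG.subgroups_Inter_pair[OF subgroup_square subgroup_equalizer[OF \<pi>_fst \<pi>\<sigma>_snd]]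
    by simp
  moreover have "derived_set (G \<times>\<times> G) U \<subseteq> S"
  proof
    fix w assume "w \<in> derived_set (G \<times>\<times> G) U"
    then obtain a b c d where ab: "(a, b) \<in> U" and cd: "(c, d) \<in> U"
      and w: "w = (a, b) \<otimes>\<^bsub>G \<times>\<times> G\<^esub> (c, d) \<otimes>\<^bsub>G \<times>\<times> G\<^esub> inv\<^bsub>G \<times>\<times> G\<^esub> (a, b)
                  \<otimes>\<^bsub>G \<times>\<times> G\<^esub> inv\<^bsub>G \<times>\<times> G\<^esub> (c, d)"
      by (elim UN_E singletonE) fastforce
    have "w \<in> U"
      unfolding w using ab cd by (intro U.m_closed U.m_inv_closed)
    moreover have "w = (a \<otimes> c \<otimes> inv a \<otimes> inv c, b \<otimes> d \<otimes> inv b \<otimes> inv d)"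
      unfolding w using pair_in_carrier[OF ab] pair_in_carrier[OF cd]
      by (simp add: inv_DirProd[OF is_group is_group])
    ultimately show "w \<in> S"
      using r_coset_commutator_fst_eq_snd[OF N_normal[unfolded N_def] \<sigma> graph ab cd]
      unfolding S_def N_def by simp
  qed
  ultimately have "derived (G \<times>\<times> G) U \<subseteq> S"
    unfolding derived_def by (rule GG.generate_subgroup_incl[rotated])
  show ?thesis
  proof
    fix g assume "g \<in> k1 G (derived (G \<times>\<times> G) U)"
    then have g: "g \<in> carrier G" "(g, \<one>) \<in> S"
      using \<open>derived (G \<times>\<times> G) U \<subseteq> S\<close> unfolding k1_def by auto
    then have "N #> g = N"
      unfolding S_def using N.subset by simp
    then show "g \<in> comm_subgroup G (k1 G U)"
      using coset_join1[OF _ g(1) N.subgroup_axioms] unfolding N_def by blast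
  qed
qed

lemma inv_twisted_diag_mem:
  assumes \<phi>: "\<phi> \<in> iso G G" and diag: "twisted_diag G \<phi> \<subseteq> U" and b: "b \<in> carrier G"
  shows "(inv_into (carrier G) \<phi> b, b) \<in> U"
proof -
  have bij: "bij_betw \<phi> (carrier G) (carrier G)"
    using \<phi> unfolding iso_def by simp
  have "inv_into (carrier G) \<phi> b \<in> carrier G"
    using b bij by (simp add: bij_betw_def inv_into_into)
  then show ?thesis
    using diag bij_betw_inv_into_right[OF bij b] unfolding twisted_diag_def by force
qed

lemma k1_derived_eq_comm_subgroup:
  assumes \<phi>: "\<phi> \<in> iso G G" and diag: "twisted_diag G \<phi> \<subseteq> U"
  shows "k1 G (derived (G \<times>\<times> G) U) = comm_subgroup G (k1 G U)"
proof
  have "carrier G \<subseteq> fst ` U"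
  proof
    fix g assume "g \<in> carrier G"
    then have "fst (g, \<phi> g) \<in> fst ` U"
      using diag unfolding twisted_diag_def by (intro imageI) blast
    then show "g \<in> fst ` U"
      by simp
  qed
  moreover have "inv_into (carrier G) \<phi> \<in> hom G G"
    using iso_set_sym[OF \<phi>] unfolding iso_def by simp
  ultimately show "k1 G (derived (G \<times>\<times> G) U) \<subseteq> comm_subgroup G (k1 G U)"
    and "comm_subgroup G (k1 G U) \<subseteq> k1 G (derived (G \<times>\<times> G) U)"
    using k1_derived_subset_comm_subgroup inv_twisted_diag_mem[OF assms]
      comm_subgroup_k1_subset_k1_derived
    by blast+
qed

lemma swap_hom: "prod.swap \<in> hom (G \<times>\<times> G) (G \<times>\<times> G)"
  by (auto simp: hom_def)

lemma square_subgroup_swap: "square_subgroup G (prod.swap ` U)"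
proof -
  interpret swap: group_hom "G \<times>\<times> G" "G \<times>\<times> G" prod.swap
    using swap_hom by unfold_locales
  show ?thesis
    by (intro square_subgroup.intro square_subgroup_axioms.intro is_group
        swap.subgroup_img_is_subgroup subgroup_square)
qed

lemma derived_swap: "derived (G \<times>\<times> G) (prod.swap ` U) = prod.swap ` derived (G \<times>\<times> G) U"
proof -
  interpret swap: group_hom "G \<times>\<times> G" "G \<times>\<times> G" prod.swap
    using swap_hom by unfold_locales
  show ?thesis
    by (rule swap.derived_img[OF U.subset])
qed

lemma twisted_diag_inv_subset_swap:
  assumes "\<phi> \<in> iso G G" and "twisted_diag G \<phi> \<subseteq> U"
  shows "twisted_diag G (inv_into (carrier G) \<phi>) \<subseteq> prod.swap ` U"
  using inv_twisted_diag_mem[OF assms] unfolding twisted_diag_def by force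

lemma k2_derived_eq_comm_subgroup:
  assumes \<phi>: "\<phi> \<in> iso G G" and diag: "twisted_diag G \<phi> \<subseteq> U"
  shows "k2 G (derived (G \<times>\<times> G) U) = comm_subgroup G (k2 G U)"
proof -
  interpret V: square_subgroup G "prod.swap ` U"
    by (rule square_subgroup_swap)
  have "k2 G (derived (G \<times>\<times> G) U) = k1 G (derived (G \<times>\<times> G) (prod.swap ` U))"
    by (simp add: k2_eq_k1_swap derived_swap)
  also have "\<dots> = comm_subgroup G (k1 G (prod.swap ` U))"
    by (rule V.k1_derived_eq_comm_subgroup[OF iso_set_sym[OF \<phi>] twisted_diag_inv_subset_swap[OF assms]])
  also have "\<dots> = comm_subgroup G (k2 G U)"
    by (simp add: k2_eq_k1_swap)
  finally show ?thesis .
qed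

end

theorem proposition5p2:
  fixes G :: "('a, 'b) monoid_scheme" and \<phi> :: "'a \<Rightarrow> 'a" and U :: "('a \<times> 'a) set"
  assumes "group G" and "finite (carrier G)"
    and "\<phi> \<in> iso G G"
    and "subgroup U (G \<times>\<times> G)"
    and "twisted_diag G \<phi> \<subseteq> U"
  shows "k1 G (derived (G \<times>\<times> G) U) = comm_subgroup G (k1 G U) \<and>
         k2 G (derived (G \<times>\<times> G) U) = comm_subgroup G (k2 G U)"
proof -
  interpret square_subgroup G U
    using assms(1,4) by (rule square_subgroup.intro[OF _ square_subgroup_axioms.intro])
  show ?thesis
    using k1_derived_eq_comm_subgroup[OF assms(3,5)] k2_derived_eq_comm_subgroup[OF assms(3,5)]
    by simp
qed

end
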